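(* Under the Setting below, let $\{x^k\}_{k\ge0}$ and $\{y^k\}_{k\ge1}$ be generated by Algorithm 1 with extrapolation weights satisfying $0\le\omega_k\le\omega<1$. Then: (1) $\{H(x^k)\}_{k\ge0}$ is non-increasing; (2) $\sum_{k=1}^\infty\|x^k-y^k\|^2<\infty$, in particular $\|x^k-y^k\|\to0$; (3) the index set $I(x^k)$ changes only finitely often, i.e. there is $k_0$ with $I(x^k)=I(x^{k_0})$ for all $k\ge k_0$; (4) $\sum_{k=1}^\infty\|x^k-x^{k-1}\|^2<\infty$, in particular $\|x^k-x^{k-1}\|\to0$.
   Context: Setting. Let $\lambda>0$, $l,u\in\mathbb{R}^n$ with $l\le u$ componentwise, $X=\{x\in\mathbb{R}^n: l\le x\le u\}$, and $\delta_X$ the indicator function of $X$ ($0$ on $X$, $+\infty$ outside). For $x\in\mathbb{R}^n$, $\|x\|_0$ is the number of nonzero components of $x$ and $I(x)=\{i: x_i=0\}$. Let $f:\mathbb{R}^n\to\mathbb{R}$ be convex and differentiable, bounded from below on $X$, with $\nabla f$ $L$-Lipschitz continuous on $X$ ($L>0$). Define $H(x)=\lambda\|x\|_0+f(x)+\delta_X(x)$. Algorithm 1. Choose $\mu>0$, extrapolation weights $0\le\omega_k\le\omega<1$, and a starting point $x^0\in X$; set $x^{-1}=x^0$. For $k=0,1,2,\dots$: define $y^{k+1}\in\mathbb{R}^n$ by $y^{k+1}_i=x^k_i+\omega_k(x^k_i-x^{k-1}_i)$ for $i\notin I(x^k)$ and $y^{k+1}_i=x^k_i\,(=0)$ for $i\in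 I(x^k)$ (extrapolation only on the support of $x^k$); if $\langle y^{k+1}-x^k,\nabla f(y^{k+1})\rangle>0$ or $y^{k+1}\notin X$, reset $y^{k+1}:=x^k$; then take any $$x^{k+1}\in\arg\min_{x\in X}\ \lambda\|x\|_0+\frac{L}{2}\Big\|x-y^{k+1}+\frac1L\nabla f(y^{k+1})\Big\|^2+\frac{\mu}{2}\|x-y^{k+1}\|^2 .$$ *)

theory Defs
  imports "HOL-Analysis.Analysis"
begin

definition l0norm :: "real^'n \<Rightarrow> nat" where
  "l0norm x = card {i. x $ i \<noteq> 0}"

definition zero_idx :: "real^'n \<Rightarrow> 'n set" where
  "zero_idx x = {i. x $ i = 0}"

definition boxset :: "real^'n \<Rightarrow> real^'n \<Rightarrow> (real^'n) set" where
  "boxset l u = {x. \<forall>i. l $ i \<le> x $ i \<and> x $ i \<le> u $ i}"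

definition Hobj :: "real \<Rightarrow> (real^'n \<Rightarrow> real) \<Rightarrow> real^'n \<Rightarrow> real^'n \<Rightarrow> real^'n \<Rightarrow> ereal" where
  "Hobj lam f l u x = (if x \<in> boxset l u then ereal (lam * real (l0norm x) + f x) else \<infinity>)"

definition extrap :: "real \<Rightarrow> real^'n \<Rightarrow> real^'n \<Rightarrow> real^'n" where
  "extrap w xk xprev = (\<chi> i. if xk $ i = 0 then xk $ i else xk $ i + w * (xk $ i - xprev $ i))"

definition subobj :: "real \<Rightarrow> real \<Rightarrow> real \<Rightarrow> (real^'n \<Rightarrow> real^'n) \<Rightarrow> real^'n \<Rightarrow> real^'n \<Rightarrow> real" where
  "subobj lam L mu g y x = lam * real (l0norm x) + L / 2 * (norm (x - y + (1 / L) *\<^sub>R g y))\<^sup>2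
      + mu / 2 * (norm (x - y))\<^sup>2"

text \<open>One step of Algorithm 1; xprev is x^{k-1} (with x^{-1} = x^0), g is the gradient of f.\<close>
definition alg_step :: "real \<Rightarrow> real \<Rightarrow> real \<Rightarrow> (real^'n \<Rightarrow> real^'n) \<Rightarrow> real^'n \<Rightarrow> real^'n \<Rightarrow> real
   \<Rightarrow> real^'n \<Rightarrow> real^'n \<Rightarrow> real^'n \<Rightarrow> real^'n \<Rightarrow> bool" where
  "alg_step lam L mu g l u w xprev xk ynext xnext \<longleftrightarrow>
     (let yt = extrap w xk xprev in
       ynext = (if inner (yt - xk) (g yt) > 0 \<or> yt \<notin> boxset l u then xk else yt))
     \<and> xnext \<in> boxset l u
     \<and> (\<forall>z \<in> boxset l u. subobj lam L mu g ynext xnext \<le> subobj lam L mu g ynext z)"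

end

theory Submission
  imports Defs
begin

text \<open>
  The safeguard in the extrapolation step keeps y^{k+1} in X, does not enlarge the support and
  makes the extrapolation direction non-ascending for f, so comparing x^{k+1} with y^{k+1} in the
  subproblem, together with the descent lemma and convexity, gives the sufficient decrease
  H(x^{k+1}) + mu/2 ||x^{k+1} - y^{k+1}||^2 \<le> H(x^k). Telescoping yields (1) and (2), and
  ||x^{k+1} - x^k|| \<le> ||x^{k+1} - y^{k+1}|| + omega ||x^k - x^{k-1}|| turns (2) into (4).
  The subproblem is separable; each scalar problem is a hard threshold, so nonzero entries
  of x^{k+1} are bounded away from 0 by a constant depending only on lambda, L + mu and the
  box. Since consecutive iterates eventually differ by less than that constant, the zero
  pattern stabilises, which is (3).
\<close>

section \<open>Smooth convex functions\<close>

lemma has_real_derivative_along_line: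
  fixes f :: "real^'n \<Rightarrow> real" and g :: "real^'n \<Rightarrow> real^'n"
  assumes fgrad: "\<And>z. (f has_derivative (\<lambda>h. inner (g z) h)) (at z)"
  shows "((\<lambda>s. f (a + s *\<^sub>R d)) has_real_derivative inner (g (a + t *\<^sub>R d)) d) (at t)"
proof -
  have "((\<lambda>s. a + s *\<^sub>R d) has_derivative (\<lambda>s. s *\<^sub>R d)) (at t)"
    by (auto intro!: derivative_eq_intros)
  from has_derivative_compose[OF this fgrad]
  have "((\<lambda>s. f (a + s *\<^sub>R d)) has_derivative (\<lambda>s. s * inner (g (a + t *\<^sub>R d)) d)) (at t)"
    by simp
  then show ?thesis by (simp add: has_field_derivative_def mult_commute_abs)
qed

lemma convex_gradient_inequality:
  fixes f :: "real^'n \<Rightarrow> real" and g :: "real^'n \<Rightarrow> real^'n"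
  assumes fconv: "convex_on UNIV f"
    and fgrad: "\<And>z. (f has_derivative (\<lambda>h. inner (g z) h)) (at z)"
  shows "f y + inner (g y) (z - y) \<le> f z"
proof -
  define \<phi> where "\<phi> s = f (y + s *\<^sub>R (z - y))" for s :: real
  have "convex_on UNIV \<phi>"
  proof (rule convex_onI)
    fix s a b :: real assume s: "0 < s" "s < 1"
    have "y + ((1 - s) * a + s * b) *\<^sub>R (z - y)
        = (1 - s) *\<^sub>R (y + a *\<^sub>R (z - y)) + s *\<^sub>R (y + b *\<^sub>R (z - y))"
      by (simp add: algebra_simps)
    then show "\<phi> ((1 - s) *\<^sub>R a + s *\<^sub>R b) \<le> (1 - s) * \<phi> a + s * \<phi> b"
      unfolding \<phi>_def using convex_onD[OF fconv, of s] s by simp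
  qed simp
  moreover have "(\<phi> has_field_derivative inner (g y) (z - y)) (at 0 within UNIV)"
    using has_real_derivative_along_line[OF fgrad, of y "z - y" 0] unfolding \<phi>_def by simp
  ultimately have "\<phi> 1 - \<phi> 0 \<ge> inner (g y) (z - y) * (1 - 0)"
    by (intro convex_on_imp_above_tangent) auto
  then show ?thesis unfolding \<phi>_def by simp
qed

lemma boxset_eq_cbox: "boxset l u = cbox l u"
  by (auto simp: boxset_def mem_box_cart)

lemma lipschitz_gradient_upper_bound:
  fixes f :: "real^'n \<Rightarrow> real" and g :: "real^'n \<Rightarrow> real^'n"
  assumes fgrad: "\<And>z. (f has_derivative (\<lambda>h. inner (g z) h)) (at z)"
    and glip: "\<forall>a \<in> boxset l u. \<forall>b \<in> boxset l u. norm (g a - g b) \<le> L * norm (a - b)"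
    and a: "a \<in> boxset l u" and b: "b \<in> boxset l u"
  shows "f b \<le> f a + inner (g a) (b - a) + L / 2 * (norm (b - a))\<^sup>2"
proof -
  define d where "d = b - a"
  define h where "h = (\<lambda>s. f (a + s *\<^sub>R d) - s * inner (g a) d - L / 2 * s\<^sup>2 * (norm d)\<^sup>2)"
  have "h 1 \<le> h 0"
  proof (rule DERIV_nonpos_imp_nonincreasing[of 0 1 h])
    fix t :: real assume t: "0 \<le> t" "t \<le> 1"
    have "a + t *\<^sub>R d = (1 - t) *\<^sub>R a + t *\<^sub>R b"
      by (simp add: d_def algebra_simps)
    then have on_segment: "a + t *\<^sub>R d \<in> boxset l u"
      using convexD[of "boxset l u" a b "1 - t" t] a b t by (simp add: boxset_eq_cbox)
    have "norm (g (a + t *\<^sub>R d) - g a) \<le> L * norm (t *\<^sub>R d)"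
      using glip[rule_format, OF on_segment a] by simp
    then have "inner (g (a + t *\<^sub>R d) - g a) d \<le> L * norm (t *\<^sub>R d) * norm d"
      using norm_cauchy_schwarz[of "g (a + t *\<^sub>R d) - g a" d]
      by (meson mult_right_mono norm_ge_zero order_trans)
    also have "\<dots> = L * t * (norm d)\<^sup>2"
      using t by (simp add: power2_eq_square)
    finally have nonpos: "inner (g (a + t *\<^sub>R d)) d - inner (g a) d - L / 2 * (2 * t) * (norm d)\<^sup>2 \<le> 0"
      by (simp add: inner_diff_left)
    have deriv: "(h has_real_derivative
        inner (g (a + t *\<^sub>R d)) d - inner (g a) d - L / 2 * (2 * t) * (norm d)\<^sup>2) (at t)"
      unfolding h_def by (auto intro!: derivative_eq_intros has_real_derivative_along_line[OF fgrad])
    show "\<exists>y. (h has_real_derivative y) (at t) \<and> y \<le> 0"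
      using deriv nonpos by (intro exI conjI)
  qed simp
  then show ?thesis unfolding h_def d_def by (simp add: algebra_simps)
qed

section \<open>The proximal subproblem\<close>

lemma norm_add_scaleR_square:
  fixes a v :: "'a::real_inner"
  shows "(norm (a + c *\<^sub>R v))\<^sup>2 = (norm a)\<^sup>2 + 2 * c * inner v a + c\<^sup>2 * (norm v)\<^sup>2"
  unfolding power2_norm_eq_inner
  by (simp add: inner_add_left inner_add_right inner_commute power2_eq_square algebra_simps)

lemma subobj_expand:
  assumes "L > 0"
  shows "subobj lam L mu G y x = lam * real (l0norm x) + inner (G y) (x - y)
     + (L + mu) / 2 * (norm (x - y))\<^sup>2 + (norm (G y))\<^sup>2 / (2 * L)"
  using assms norm_add_scaleR_square[of "x - y" "1 / L" "G y"]
  unfolding subobj_def by (simp add: field_simps power2_eq_square)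

lemma subobj_complete_square:
  assumes "L > 0" "mu > 0"
  shows "subobj lam L mu G y x = lam * real (l0norm x)
     + (L + mu) / 2 * (norm (x - (y - (1 / (L + mu)) *\<^sub>R G y)))\<^sup>2
     + ((norm (G y))\<^sup>2 / (2 * L) - (norm (G y))\<^sup>2 / (2 * (L + mu)))"
proof -
  define c where "c = L + mu"
  have c: "c > 0" using assms by (simp add: c_def)
  have "(norm (x - (y - (1 / c) *\<^sub>R G y)))\<^sup>2
      = (norm (x - y))\<^sup>2 + 2 / c * inner (G y) (x - y) + (norm (G y))\<^sup>2 / c\<^sup>2"
    using norm_add_scaleR_square[of "x - y" "1 / c" "G y"] by (simp add: power_divide algebra_simps)
  then have "c / 2 * (norm (x - (y - (1 / c) *\<^sub>R G y)))\<^sup>2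
      = c / 2 * (norm (x - y))\<^sup>2 + inner (G y) (x - y) + (norm (G y))\<^sup>2 / (2 * c)"
    using c by (simp add: field_simps power2_eq_square)
  then show ?thesis
    using subobj_expand[OF assms(1), of lam mu G y x] unfolding c_def[symmetric] by linarith
qed

definition scalar_prox_obj :: "real \<Rightarrow> real \<Rightarrow> real \<Rightarrow> real \<Rightarrow> real" where
  "scalar_prox_obj lam c v t = lam * (if t = 0 then 0 else 1) + c / 2 * (t - v)\<^sup>2"

lemma l0_plus_dist_square_eq_sum:
  fixes x v :: "real^'n"
  shows "lam * real (l0norm x) + c / 2 * (norm (x - v))\<^sup>2
       = (\<Sum>i\<in>UNIV. scalar_prox_obj lam c (v $ i) (x $ i))"
proof -
  have "real (l0norm x) = (\<Sum>i\<in>UNIV. if x $ i = 0 then 0 else 1)"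
    unfolding l0norm_def by (simp add: sum.If_cases Collect_neg_eq)
  moreover have "(norm (x - v))\<^sup>2 = (\<Sum>i\<in>UNIV. (x $ i - v $ i)\<^sup>2)"
    unfolding power2_norm_eq_inner inner_vec_def by (simp add: power2_eq_square)
  ultimately show ?thesis
    unfolding scalar_prox_obj_def by (simp add: sum.distrib sum_distrib_left)
qed

lemma separable_minimizer_on_boxset:
  fixes \<phi> :: "'n::finite \<Rightarrow> real \<Rightarrow> real" and x :: "real^'n"
  assumes x: "x \<in> boxset l u"
    and min: "\<forall>z \<in> boxset l u. (\<Sum>i\<in>UNIV. \<phi> i (x $ i)) \<le> (\<Sum>i\<in>UNIV. \<phi> i (z $ i))"
    and t: "l $ j \<le> t" "t \<le> u $ j"
  shows "\<phi> j (x $ j) \<le> \<phi> j t"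
proof -
  define z where "z = (\<chi> i. if i = j then t else x $ i)"
  have "z \<in> boxset l u" using x t by (auto simp: boxset_def z_def)
  with min have "(\<Sum>i\<in>UNIV. \<phi> i (x $ i)) \<le> (\<Sum>i\<in>UNIV. \<phi> i (z $ i))" by blast
  moreover have split: "(\<Sum>i\<in>UNIV. \<phi> i (w $ i)) = \<phi> j (w $ j) + (\<Sum>i\<in>UNIV - {j}. \<phi> i (w $ i))"
    for w :: "real^'n" by (rule sum.remove) auto
  moreover have "(\<Sum>i\<in>UNIV - {j}. \<phi> i (z $ i)) = (\<Sum>i\<in>UNIV - {j}. \<phi> i (x $ i))"
    by (rule sum.cong) (auto simp: z_def)
  ultimately show ?thesis using split[of x] split[of z] by (simp add: z_def)
qed

section \<open>Hard thresholding\<close>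

lemma scalar_prox_positive_minimizer:
  fixes lam c v l u a :: real
  assumes lam: "lam > 0" and c: "c > 0" and a: "l \<le> a" "a \<le> u" "0 < a"
    and min: "\<And>t. l \<le> t \<Longrightarrow> t \<le> u \<Longrightarrow> scalar_prox_obj lam c v a \<le> scalar_prox_obj lam c v t"
  shows "\<exists>r \<in> insert (sqrt (2 * lam / c)) ({\<bar>l\<bar>, \<bar>u\<bar>} - {0}). r \<le> a"
proof -
  consider "0 < l" | "a = u" | "l \<le> 0" "a < u"
    using a by linarith
  then show ?thesis
  proof cases
    case 1
    then show ?thesis using a by (intro bexI[of _ "\<bar>l\<bar>"]) auto
  next
    case 2
    then show ?thesis using a by (intro bexI[of _ "\<bar>u\<bar>"]) auto
  next
    case 3
    have "v = a"
    proof (rule ccontr)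
      assume "v \<noteq> a"
      \<comment> \<open>move from a towards v without leaving the box or reaching 0\<close>
      define t where "t = (if a < v then min u v else max v (a / 2))"
      have t: "l \<le> t" "t \<le> u" "t \<noteq> 0" "\<bar>t - v\<bar> < \<bar>a - v\<bar>"
        using 3 a \<open>v \<noteq> a\<close> by (auto simp: t_def)
      have "(t - v)\<^sup>2 < (a - v)\<^sup>2"
        using power_strict_mono[OF t(4) abs_ge_zero, of 2] by simp
      moreover have "scalar_prox_obj lam c v a \<le> scalar_prox_obj lam c v t"
        using min t(1,2) .
      ultimately show False
        using t(3) a c by (simp add: scalar_prox_obj_def)
    qed
    then have "lam \<le> c / 2 * a\<^sup>2"
      using min[of 0] 3 a by (simp add: scalar_prox_obj_def)
    then have "2 * lam / c \<le> a\<^sup>2"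
      using c by (simp add: field_simps)
    then have "sqrt (2 * lam / c) \<le> a"
      using a by (simp add: real_le_lsqrt real_sqrt_le_iff)
    then show ?thesis by blast
  qed
qed

lemma scalar_prox_nonzero_minimizer:
  fixes lam c v l u a :: real
  assumes lam: "lam > 0" and c: "c > 0" and a: "l \<le> a" "a \<le> u" "a \<noteq> 0"
    and min: "\<And>t. l \<le> t \<Longrightarrow> t \<le> u \<Longrightarrow> scalar_prox_obj lam c v a \<le> scalar_prox_obj lam c v t"
  shows "\<exists>r \<in> insert (sqrt (2 * lam / c)) ({\<bar>l\<bar>, \<bar>u\<bar>} - {0}). r \<le> \<bar>a\<bar>"
proof (cases "0 < a")
  case True
  then show ?thesis using scalar_prox_positive_minimizer[OF lam c a(1,2) True min] by simp
next
  case False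
  have reflect: "scalar_prox_obj lam c (- v) (- t) = scalar_prox_obj lam c v t" for t
    by (simp add: scalar_prox_obj_def power2_commute)
  have "\<exists>r \<in> insert (sqrt (2 * lam / c)) ({\<bar>- u\<bar>, \<bar>- l\<bar>} - {0}). r \<le> - a"
  proof (rule scalar_prox_positive_minimizer[OF lam c])
    fix t assume "- u \<le> t" "t \<le> - l"
    then show "scalar_prox_obj lam c (- v) (- a) \<le> scalar_prox_obj lam c (- v) t"
      using min[of "- t"] reflect[of a] reflect[of "- t"] by simp
  qed (use a False in auto)
  then show ?thesis using False by auto
qed

text \<open>A nonzero entry can sit at a bound only if that bound is nonzero, so zero bounds are dropped.\<close>
definition l0_box_threshold :: "real \<Rightarrow> real \<Rightarrow> real^'n \<Rightarrow> real^'n \<Rightarrow> real" where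
  "l0_box_threshold lam c l u =
     Min (insert (sqrt (2 * lam / c)) ((\<Union>j. {\<bar>l $ j\<bar>, \<bar>u $ j\<bar>}) - {0}))"

lemma l0_box_threshold_pos:
  assumes "lam > 0" "c > 0"
  shows "0 < l0_box_threshold lam c l u"
  unfolding l0_box_threshold_def using assms by (subst Min_gr_iff) auto

lemma subobj_minimizer_nonzero_ge_threshold:
  fixes x y :: "real^'n"
  assumes lam: "lam > 0" and L: "L > 0" and mu: "mu > 0"
    and x: "x \<in> boxset l u"
    and min: "\<forall>z \<in> boxset l u. subobj lam L mu G y x \<le> subobj lam L mu G y z"
    and nz: "x $ j \<noteq> 0"
  shows "l0_box_threshold lam (L + mu) l u \<le> \<bar>x $ j\<bar>"
proof -
  define v where "v = y - (1 / (L + mu)) *\<^sub>R G y"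
  have "\<forall>z \<in> boxset l u. (\<Sum>i\<in>UNIV. scalar_prox_obj lam (L + mu) (v $ i) (x $ i))
                        \<le> (\<Sum>i\<in>UNIV. scalar_prox_obj lam (L + mu) (v $ i) (z $ i))"
    using min unfolding subobj_complete_square[OF L mu] l0_plus_dist_square_eq_sum v_def
    by simp
  then have "scalar_prox_obj lam (L + mu) (v $ j) (x $ j) \<le> scalar_prox_obj lam (L + mu) (v $ j) t"
    if "l $ j \<le> t" "t \<le> u $ j" for t
    by (rule separable_minimizer_on_boxset[OF x _ that,
          where \<phi> = "\<lambda>i. scalar_prox_obj lam (L + mu) (v $ i)"])
  moreover have "l $ j \<le> x $ j" "x $ j \<le> u $ j"
    using x by (auto simp: boxset_def)
  ultimately obtain r
    where r: "r \<in> insert (sqrt (2 * lam / (L + mu))) ({\<bar>l $ j\<bar>, \<bar>u $ j\<bar>} - {0})" "r \<le> \<bar>x $ j\<bar>"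
    using scalar_prox_nonzero_minimizer[OF lam _ _ _ nz] L mu by (metis add_pos_pos)
  have "l0_box_threshold lam (L + mu) l u \<le> r"
    unfolding l0_box_threshold_def using r(1) by (intro Min_le) auto
  with r(2) show ?thesis by linarith
qed

section \<open>One step of the algorithm\<close>

lemma alg_step_minimizer:
  assumes "alg_step lam L mu g l u w xp xk y' x'"
  shows "x' \<in> boxset l u" "\<forall>z \<in> boxset l u. subobj lam L mu g y' x' \<le> subobj lam L mu g y' z"
  using assms unfolding alg_step_def by simp_all

lemma alg_step_extrapolation:
  assumes st: "alg_step lam L mu g l u w xp xk y' x'" and xk: "xk \<in> boxset l u" and w: "0 \<le> w"
  shows "y' \<in> boxset l u" "l0norm y' \<le> l0norm xk" "inner (y' - xk) (g y') \<le> 0"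
    "norm (y' - xk) \<le> w * norm (xk - xp)"
proof -
  define yt where "yt = extrap w xk xp"
  have y': "y' = (if inner (yt - xk) (g yt) > 0 \<or> yt \<notin> boxset l u then xk else yt)"
    using st unfolding alg_step_def yt_def Let_def by auto
  show "y' \<in> boxset l u" "inner (y' - xk) (g y') \<le> 0"
    using y' xk by auto
  have "l0norm yt \<le> l0norm xk"
    unfolding yt_def l0norm_def extrap_def by (rule card_mono) auto
  then show "l0norm y' \<le> l0norm xk"
    using y' by auto
  have "norm (yt - xk) \<le> norm (w *\<^sub>R (xk - xp))"
    by (rule norm_le_componentwise_cart) (auto simp: yt_def extrap_def)
  then show "norm (y' - xk) \<le> w * norm (xk - xp)"
    using y' w by auto
qed

lemma alg_step_sufficient_decrease:
  fixes f :: "real^'n \<Rightarrow> real" and g :: "real^'n \<Rightarrow> real^'n"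
  assumes L: "L > 0" and lam: "lam \<ge> 0"
    and fconv: "convex_on UNIV f"
    and fgrad: "\<And>z. (f has_derivative (\<lambda>h. inner (g z) h)) (at z)"
    and glip: "\<forall>a \<in> boxset l u. \<forall>b \<in> boxset l u. norm (g a - g b) \<le> L * norm (a - b)"
    and xk: "xk \<in> boxset l u" and w: "0 \<le> w"
    and st: "alg_step lam L mu g l u w xp xk y' x'"
  shows "lam * real (l0norm x') + f x' + mu / 2 * (norm (x' - y'))\<^sup>2
      \<le> lam * real (l0norm xk) + f xk"
proof -
  note y' = alg_step_extrapolation[OF st xk w]
  have x': "x' \<in> boxset l u" and "subobj lam L mu g y' x' \<le> subobj lam L mu g y' y'"
    using alg_step_minimizer[OF st] y'(1) by auto
  then have "lam * real (l0norm x') + inner (g y') (x' - y') + (L + mu) / 2 * (norm (x' - y'))\<^sup>2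
      \<le> lam * real (l0norm y')"
    using subobj_expand[OF L, of lam mu g y' x'] subobj_expand[OF L, of lam mu g y' y'] by simp
  moreover have "f x' \<le> f y' + inner (g y') (x' - y') + L / 2 * (norm (x' - y'))\<^sup>2"
    by (rule lipschitz_gradient_upper_bound[OF fgrad glip y'(1) x'])
  moreover have "f y' \<le> f xk"
    using convex_gradient_inequality[OF fconv fgrad, of y' xk] y'(3)
    by (simp add: inner_diff_right inner_commute)
  moreover have "lam * real (l0norm y') \<le> lam * real (l0norm xk)"
    using y'(2) lam by (simp add: mult_left_mono)
  ultimately show ?thesis
    unfolding add_divide_distrib distrib_right by linarith
qed

lemma alg_step_displacement:
  assumes "alg_step lam L mu g l u w xp xk y' x'" "xk \<in> boxset l u" "0 \<le> w"
  shows "norm (x' - xk) \<le> norm (x' - y') + w * norm (xk - xp)"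
  using alg_step_extrapolation(4)[OF assms] norm_triangle_ineq[of "x' - y'" "y' - xk"] by simp

section \<open>Real sequences\<close>

lemma summable_of_sufficient_decrease:
  fixes F d :: "nat \<Rightarrow> real"
  assumes dec: "\<And>k. F (Suc k) + d k \<le> F k" and d: "\<And>k. 0 \<le> d k" and bdd: "\<And>k. c \<le> F k"
  shows "summable d"
proof (rule summableI_nonneg_bounded[OF d])
  fix N
  have "(\<Sum>k<N. d k) \<le> F 0 - F N"
  proof (induction N)
    case (Suc N)
    then show ?case using dec[of N] by simp
  qed simp
  then show "(\<Sum>k<N. d k) \<le> F 0 - c"
    using bdd[of N] by linarith
qed

lemma tendsto_zero_of_summable_norm_square:
  fixes z :: "nat \<Rightarrow> 'a::real_normed_vector"
  assumes "summable (\<lambda>k. (norm (z k))\<^sup>2)"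
  shows "(\<lambda>k. norm (z k)) \<longlonglongrightarrow> 0"
proof -
  have "(\<lambda>k. sqrt ((norm (z k))\<^sup>2)) \<longlonglongrightarrow> sqrt 0"
    by (intro tendsto_real_sqrt summable_LIMSEQ_zero[OF assms])
  then show ?thesis by simp
qed

text \<open>Convexity of the square with the weights 1 - omega and omega, at b / (1 - omega) and p.\<close>
lemma power2_add_le_weighted:
  fixes b p \<omega> :: real
  assumes "0 \<le> \<omega>" "\<omega> < 1"
  shows "(b + \<omega> * p)\<^sup>2 \<le> b\<^sup>2 / (1 - \<omega>) + \<omega> * p\<^sup>2"
proof -
  have "(1 - \<omega>) * (b\<^sup>2 / (1 - \<omega>) + \<omega> * p\<^sup>2) - (1 - \<omega>) * (b + \<omega> * p)\<^sup>2
      = \<omega> * (b - (1 - \<omega>) * p)\<^sup>2"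
    using assms by (simp add: field_simps power2_eq_square)
  moreover have "0 \<le> \<omega> * (b - (1 - \<omega>) * p)\<^sup>2"
    using assms by simp
  ultimately have "(1 - \<omega>) * (b + \<omega> * p)\<^sup>2 \<le> (1 - \<omega>) * (b\<^sup>2 / (1 - \<omega>) + \<omega> * p\<^sup>2)"
    by linarith
  then show ?thesis
    using assms by (simp add: mult_le_cancel_left_pos)
qed

lemma summable_square_of_inertial_bound:
  fixes a b :: "nat \<Rightarrow> real"
  assumes \<omega>: "0 \<le> \<omega>" "\<omega> < 1" and a: "\<And>k. 0 \<le> a k"
    and start: "a 0 \<le> b 0" and rec: "\<And>k. a (Suc k) \<le> b (Suc k) + \<omega> * a k"
    and b: "summable (\<lambda>k. (b k)\<^sup>2)"
  shows "summable (\<lambda>k. (a k)\<^sup>2)"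
proof -
  have "(a 0)\<^sup>2 \<le> (b 0)\<^sup>2"
    using start a[of 0] by (intro power_mono) auto
  also have "\<dots> \<le> (b 0)\<^sup>2 / (1 - \<omega>)"
    using \<omega> by (simp add: le_divide_eq mult_left_le)
  finally have sq0: "(a 0)\<^sup>2 \<le> (b 0)\<^sup>2 / (1 - \<omega>)" .
  have sq: "(a (Suc k))\<^sup>2 \<le> (b (Suc k))\<^sup>2 / (1 - \<omega>) + \<omega> * (a k)\<^sup>2" for k
  proof -
    have "(a (Suc k))\<^sup>2 \<le> (b (Suc k) + \<omega> * a k)\<^sup>2"
      using rec[of k] a[of "Suc k"] by (intro power_mono) auto
    also have "\<dots> \<le> (b (Suc k))\<^sup>2 / (1 - \<omega>) + \<omega> * (a k)\<^sup>2"
      by (rule power2_add_le_weighted[OF \<omega>])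
    finally show ?thesis .
  qed
  have partial: "(\<Sum>k<Suc N. (a k)\<^sup>2)
      \<le> (\<Sum>k<Suc N. (b k)\<^sup>2) / (1 - \<omega>) + \<omega> * (\<Sum>k<N. (a k)\<^sup>2)" for N
  proof (induction N)
    case 0
    then show ?case using sq0 by simp
  next
    case (Suc N)
    then show ?case
      using sq[of N] by (simp add: add_divide_distrib distrib_left)
  qed
  show ?thesis
  proof (rule summableI_nonneg_bounded)
    fix N
    have "(\<Sum>k<Suc N. (b k)\<^sup>2) \<le> (\<Sum>k. (b k)\<^sup>2)"
      by (rule sum_le_suminf[OF b]) auto
    then have "(\<Sum>k<Suc N. (b k)\<^sup>2) / (1 - \<omega>) \<le> (\<Sum>k. (b k)\<^sup>2) / (1 - \<omega>)"
      using \<omega> by (simp add: divide_right_mono)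
    moreover have "\<omega> * (\<Sum>k<N. (a k)\<^sup>2) \<le> \<omega> * (\<Sum>k<Suc N. (a k)\<^sup>2)"
      using \<omega> by (simp add: mult_left_mono)
    ultimately have "(\<Sum>k<Suc N. (a k)\<^sup>2)
        \<le> (\<Sum>k. (b k)\<^sup>2) / (1 - \<omega>) + \<omega> * (\<Sum>k<Suc N. (a k)\<^sup>2)"
      using partial[of N] by linarith
    then have "(1 - \<omega>) * (\<Sum>k<Suc N. (a k)\<^sup>2) \<le> (\<Sum>k. (b k)\<^sup>2) / (1 - \<omega>)"
      by (simp add: algebra_simps)
    then have "(\<Sum>k<Suc N. (a k)\<^sup>2) \<le> (\<Sum>k. (b k)\<^sup>2) / (1 - \<omega>) / (1 - \<omega>)"
      using \<omega> by (simp add: pos_le_divide_eq mult.commute)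
    then show "(\<Sum>k<N. (a k)\<^sup>2) \<le> (\<Sum>k. (b k)\<^sup>2) / (1 - \<omega>) / (1 - \<omega>)"
      using zero_le_power2[of "a N"] by (simp only: sum.lessThan_Suc)
  qed simp
qed

lemma zero_idx_eventually_constant:
  fixes x :: "nat \<Rightarrow> real^'n"
  assumes \<delta>: "\<delta> > 0" and sep: "\<And>k j. x (Suc k) $ j \<noteq> 0 \<Longrightarrow> \<delta> \<le> \<bar>x (Suc k) $ j\<bar>"
    and lim: "(\<lambda>k. norm (x (Suc k) - x k)) \<longlonglongrightarrow> 0"
  shows "\<exists>k0. \<forall>k\<ge>k0. zero_idx (x k) = zero_idx (x k0)"
proof -
  obtain K where K: "\<And>k. K \<le> k \<Longrightarrow> norm (x (Suc k) - x k) < \<delta>"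
    using order_tendstoD(2)[OF lim \<delta>] unfolding eventually_sequentially by blast
  have same: "zero_idx (x (Suc (Suc k))) = zero_idx (x (Suc k))" if "K \<le> k" for k
  proof -
    have "\<bar>x (Suc (Suc k)) $ j - x (Suc k) $ j\<bar> < \<delta>" for j
      using component_le_norm_cart[of "x (Suc (Suc k)) - x (Suc k)" j] K[of "Suc k"] that by simp
    then have "x (Suc (Suc k)) $ j = 0 \<longleftrightarrow> x (Suc k) $ j = 0" for j
      using sep[of "Suc k" j] sep[of k j] by (smt (verit) abs_0 diff_zero minus_diff_eq abs_minus_cancel)
    then show ?thesis unfolding zero_idx_def by auto
  qed
  have "zero_idx (x k) = zero_idx (x (Suc K))" if "Suc K \<le> k" for k
    using that
  proof (induction k rule: dec_induct)
    case (step m)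
    then obtain m' where "m = Suc m'" "K \<le> m'" by (cases m) auto
    with step.IH same show ?case by simp
  qed simp
  then show ?thesis by blast
qed

theorem lemma2p5:
  fixes f :: "real^'n \<Rightarrow> real" and g :: "real^'n \<Rightarrow> real^'n"
    and l u :: "real^'n" and lam L mu \<omega> :: real
    and w :: "nat \<Rightarrow> real" and x y :: "nat \<Rightarrow> real^'n"
  assumes lam: "lam > 0" and Lpos: "L > 0" and mu: "mu > 0"
    and lu: "\<forall>i. l $ i \<le> u $ i"
    and fconv: "convex_on UNIV f"
    and fgrad: "\<And>z. (f has_derivative (\<lambda>h. inner (g z) h)) (at z)"
    and fbdd: "\<exists>c. \<forall>z \<in> boxset l u. c \<le> f z"
    and glip: "\<forall>a \<in> boxset l u. \<forall>b \<in> boxset l u. norm (g a - g b) \<le> L * norm (a - b)"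
    and wk: "\<And>k. 0 \<le> w k \<and> w k \<le> \<omega>" and om: "\<omega> < 1"
    and x0: "x 0 \<in> boxset l u"
    and step: "\<And>k. alg_step lam L mu g l u (w k) (if k = 0 then x 0 else x (k - 1)) (x k)
                  (y (Suc k)) (x (Suc k))"
  shows "(\<forall>k. Hobj lam f l u (x (Suc k)) \<le> Hobj lam f l u (x k))
    \<and> summable (\<lambda>k. (norm (x (Suc k) - y (Suc k)))\<^sup>2)
    \<and> (\<lambda>k. norm (x (Suc k) - y (Suc k))) \<longlonglongrightarrow> 0
    \<and> (\<exists>k0. \<forall>k\<ge>k0. zero_idx (x k) = zero_idx (x k0))
    \<and> summable (\<lambda>k. (norm (x (Suc k) - x k))\<^sup>2)
    \<and> (\<lambda>k. norm (x (Suc k) - x k)) \<longlonglongrightarrow> 0"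
proof -
  define F where "F z = lam * real (l0norm z) + f z" for z
  define xprev where "xprev k = (if k = 0 then x 0 else x (k - 1))" for k
  have \<omega>: "0 \<le> \<omega>" using wk[of 0] by simp
  have box: "x k \<in> boxset l u" for k
    using x0 alg_step_minimizer(1)[OF step[of "k - 1"]] by (cases k) simp_all
  have decrease: "F (x (Suc k)) + mu / 2 * (norm (x (Suc k) - y (Suc k)))\<^sup>2 \<le> F (x k)" for k
    using alg_step_sufficient_decrease[OF Lpos _ fconv fgrad glip box _ step] lam wk
    unfolding F_def by (simp add: add.assoc)
  obtain c where "\<forall>z \<in> boxset l u. c \<le> f z" using fbdd by blast
  then have F_bdd: "c \<le> F (x k)" for k
    using box[of k] lam unfolding F_def by (simp add: add_increasing)
  have "F (x (Suc k)) \<le> F (x k)" for k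
  proof -
    have "0 \<le> mu / 2 * (norm (x (Suc k) - y (Suc k)))\<^sup>2" using mu by simp
    with decrease[of k] show ?thesis by linarith
  qed
  then have H_mono: "\<forall>k. Hobj lam f l u (x (Suc k)) \<le> Hobj lam f l u (x k)"
    using box unfolding Hobj_def F_def by simp
  have "summable (\<lambda>k. mu / 2 * (norm (x (Suc k) - y (Suc k)))\<^sup>2)"
    by (rule summable_of_sufficient_decrease[of "\<lambda>k. F (x k)", OF decrease _ F_bdd]) (use mu in simp)
  then have residuals: "summable (\<lambda>k. (norm (x (Suc k) - y (Suc k)))\<^sup>2)"
    using mu by simp
  have inertial: "norm (x (Suc k) - x k) \<le> norm (x (Suc k) - y (Suc k)) + \<omega> * norm (x k - xprev k)" for k
    using alg_step_displacement[OF step[of k] box] wk[of k] mult_right_mono[of "w k" \<omega>]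
    unfolding xprev_def by (smt (verit) norm_ge_zero)
  have steps: "summable (\<lambda>k. (norm (x (Suc k) - x k))\<^sup>2)"
  proof (rule summable_square_of_inertial_bound[OF \<omega> om _ _ _ residuals])
    show "norm (x (Suc 0) - x 0) \<le> norm (x (Suc 0) - y (Suc 0))"
      using inertial[of 0] by (simp add: xprev_def)
    show "norm (x (Suc (Suc k)) - x (Suc k)) \<le> norm (x (Suc (Suc k)) - y (Suc (Suc k))) + \<omega> * norm (x (Suc k) - x k)" for k
      using inertial[of "Suc k"] by (simp add: xprev_def)
  qed simp
  have "\<exists>k0. \<forall>k\<ge>k0. zero_idx (x k) = zero_idx (x k0)"
  proof (rule zero_idx_eventually_constant[OF l0_box_threshold_pos])
    show "(\<lambda>k. norm (x (Suc k) - x k)) \<longlonglongrightarrow> 0"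
      by (rule tendsto_zero_of_summable_norm_square[OF steps])
    fix k j assume "x (Suc k) $ j \<noteq> 0"
    then show "l0_box_threshold lam (L + mu) l u \<le> \<bar>x (Suc k) $ j\<bar>"
      using alg_step_minimizer[OF step[of k]]
      by (intro subobj_minimizer_nonzero_ge_threshold[OF lam Lpos mu]) simp_all
  qed (use lam Lpos mu in simp_all)
  then show ?thesis
    using H_mono residuals steps tendsto_zero_of_summable_norm_square[OF residuals]
      tendsto_zero_of_summable_norm_square[OF steps] by blast
qed

end
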